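(* Let $\phi\ge1$. Consider a knapsack instance with arbitrary profits $p_1,\ldots,p_n\in\mathbb{R}_{\ge0}$ in which each weight $w_i$ is chosen uniformly at random from an arbitrary interval $A_i\subseteq[0,1]$ of length $1/\phi$, independently of the other weights, and let $\mathcal{P}$ be the set of Pareto-optimal solutions. Then for every $t\ge0$ and every $\varepsilon>0$, $\Pr[\exists x\in\mathcal{P}: w^{\mathsf T}x\in(t,t+\varepsilon]]\le n\phi\varepsilon$.
   Context: Solutions are vectors $x\in\{0,1\}^n$. A solution $y$ dominates $x$ if $p^{\mathsf T}y\ge p^{\mathsf T}x$ and $w^{\mathsf T}y\le w^{\mathsf T}x$ with at least one inequality strict; $x$ is Pareto-optimal if no solution dominates it. *)

theory Defs
  imports "HOL-Probability.Probability"
begin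

text \<open>Solutions are 0/1 vectors of length n, represented as functions on nat
  that take values in {0,1} on indices i < n and are 0 elsewhere.\<close>
definition solutions :: "nat \<Rightarrow> (nat \<Rightarrow> real) set" where
  "solutions n = {x. (\<forall>i<n. x i \<in> {0, 1}) \<and> (\<forall>i\<ge>n. x i = 0)}"

definition dotp :: "nat \<Rightarrow> (nat \<Rightarrow> real) \<Rightarrow> (nat \<Rightarrow> real) \<Rightarrow> real" where
  "dotp n v x = (\<Sum>i<n. v i * x i)"

definition dominates ::
  "nat \<Rightarrow> (nat \<Rightarrow> real) \<Rightarrow> (nat \<Rightarrow> real) \<Rightarrow> (nat \<Rightarrow> real) \<Rightarrow> (nat \<Rightarrow> real) \<Rightarrow> bool" where
  "dominates n p w y x \<longleftrightarrow>
     dotp n p y \<ge> dotp n p x \<and> dotp n w y \<le> dotp n w x \<and>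
     (dotp n p y > dotp n p x \<or> dotp n w y < dotp n w x)"

definition pareto_set :: "nat \<Rightarrow> (nat \<Rightarrow> real) \<Rightarrow> (nat \<Rightarrow> real) \<Rightarrow> (nat \<Rightarrow> real) set" where
  "pareto_set n p w =
     {x \<in> solutions n. \<not> (\<exists>y \<in> solutions n. dominates n p w y x)}"

definition weight_measure :: "nat \<Rightarrow> (nat \<Rightarrow> real) \<Rightarrow> real \<Rightarrow> (nat \<Rightarrow> real) measure" where
  "weight_measure n a \<phi> =
     PiM {..<n} (\<lambda>i. uniform_measure lborel {a i .. a i + 1 / \<phi>})"

end

theory Submission
  imports Defs
begin

(* Let the winner be a most profitable solution of weight at most t and
   the loser a lightest solution that is more profitable than the winner.  If some Pareto-optimal
   solution has weight in (t, t + eps], then so has the loser, and since profits are nonnegative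
   the loser contains an item i that the winner lacks.  Restricting the winner to solutions
   without i and the loser to solutions with i, the winner no longer depends on w_i, and w_i
   shifts the weights of all loser candidates by the same amount.  So once the other weights
   are fixed, the event that this loser lands in (t, t + eps] confines w_i to an interval of
   length eps, which has probability at most phi * eps.  A union bound over i gives n * phi * eps. *)


lemma finite_solutions: "finite (solutions n)"
proof -
  let ?g = "\<lambda>f::nat \<Rightarrow> real. \<lambda>i. if i < n then f i else 0"
  have "solutions n \<subseteq> ?g ` ({..<n} \<rightarrow>\<^sub>E {0, 1})"
  proof
    fix x assume x: "x \<in> solutions n"
    then have "x = ?g (restrict x {..<n})" by (auto simp: solutions_def fun_eq_iff)
    moreover have "restrict x {..<n} \<in> {..<n} \<rightarrow>\<^sub>E {0, 1}" using x by (auto simp: solutions_def)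
    ultimately show "x \<in> ?g ` ({..<n} \<rightarrow>\<^sub>E {0, 1})" by blast
  qed
  moreover have "finite ({..<n} \<rightarrow>\<^sub>E ({0, 1} :: real set))" by (intro finite_PiE) auto
  ultimately show ?thesis by (meson finite_imageI finite_subset)
qed

lemma dotp_fun_upd:
  assumes "i < n"
  shows "dotp n (v(i := u)) z = dotp n (v(i := 0)) z + u * z i"
proof -
  have "dotp n (v(i := u)) z = (\<Sum>j<n. (v(i := 0)) j * z j + (if j = i then u * z j else 0))"
    unfolding dotp_def by (intro sum.cong) auto
  also have "\<dots> = dotp n (v(i := 0)) z + u * z i"
    unfolding dotp_def sum.distrib using assms by simp
  finally show ?thesis .
qed

lemma dotp_fun_upd_if_zero:
  assumes "z i = 0"
  shows "dotp n (v(i := u)) z = dotp n v z"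
  unfolding dotp_def using assms by (intro sum.cong) auto

lemma ex_coordinate_if_dotp_less:
  assumes "x \<in> solutions n" "y \<in> solutions n" "\<And>j. j < n \<Longrightarrow> p j \<ge> 0"
    and "dotp n p x < dotp n p y"
  shows "\<exists>i<n. x i = 0 \<and> y i = 1"
proof (rule ccontr)
  assume "\<not> ?thesis"
  then have "y j \<le> x j" if "j < n" for j
    using assms(1,2) that unfolding solutions_def by fastforce
  then have "p j * y j \<le> p j * x j" if "j < n" for j
    using assms(3) that by (simp add: mult_left_mono)
  then have "dotp n p y \<le> dotp n p x" unfolding dotp_def by (intro sum_mono) auto
  with assms(4) show False by simp
qed

definition is_winner ::
  "nat \<Rightarrow> (nat \<Rightarrow> real) \<Rightarrow> real \<Rightarrow> nat \<Rightarrow> (nat \<Rightarrow> real) \<Rightarrow> (nat \<Rightarrow> real) \<Rightarrow> bool" where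
  "is_winner n p t i w x \<longleftrightarrow> x \<in> solutions n \<and> x i = 0 \<and> dotp n w x \<le> t \<and>
     (\<forall>z\<in>solutions n. z i = 0 \<and> dotp n w z \<le> t \<longrightarrow> dotp n p z \<le> dotp n p x)"

definition is_loser ::
  "nat \<Rightarrow> (nat \<Rightarrow> real) \<Rightarrow> nat \<Rightarrow> (nat \<Rightarrow> real) \<Rightarrow> (nat \<Rightarrow> real) \<Rightarrow> (nat \<Rightarrow> real) \<Rightarrow> bool" where
  "is_loser n p i w x y \<longleftrightarrow> y \<in> solutions n \<and> y i = 1 \<and> dotp n p x < dotp n p y \<and>
     (\<forall>z\<in>solutions n. z i = 1 \<and> dotp n p x < dotp n p z \<longrightarrow> dotp n w y \<le> dotp n w z)"

(* The bounded quantifiers over the finite set of solutions, instead of a choice of arg-max and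
   arg-min, are what make this event measurable. *)
definition loser_in_window ::
  "nat \<Rightarrow> (nat \<Rightarrow> real) \<Rightarrow> real \<Rightarrow> real \<Rightarrow> nat \<Rightarrow> (nat \<Rightarrow> real) \<Rightarrow> bool" where
  "loser_in_window n p t \<epsilon> i w \<longleftrightarrow>
     (\<exists>x\<in>solutions n. \<exists>y\<in>solutions n.
        is_winner n p t i w x \<and> is_loser n p i w x y \<and> dotp n w y \<in> {t<..t + \<epsilon>})"

lemma pareto_in_window_imp_loser_in_window:
  assumes p: "\<And>j. j < n \<Longrightarrow> p j \<ge> 0" and "t \<ge> 0"
    and x0: "x0 \<in> pareto_set n p w" "dotp n w x0 \<in> {t<..t + \<epsilon>}"
  shows "\<exists>i<n. loser_in_window n p t \<epsilon> i w"
proof -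
  define A where "A = {z \<in> solutions n. dotp n w z \<le> t}"
  have "finite A" using finite_solutions by (simp add: A_def)
  moreover have "(\<lambda>_. 0) \<in> A" using \<open>t \<ge> 0\<close> by (simp add: A_def solutions_def dotp_def)
  ultimately obtain xw where xw: "xw \<in> A" "Max (dotp n p ` A) = dotp n p xw"
    by (metis obtains_MAX empty_iff)
  with \<open>finite A\<close> have xw_max: "dotp n p z \<le> dotp n p xw" if "z \<in> A" for z
    using that by (metis Max_ge finite_imageI imageI)
  define B where "B = {z \<in> solutions n. dotp n p xw < dotp n p z}"
  have "x0 \<in> B"
  proof (rule ccontr)
    assume "x0 \<notin> B"
    with x0 xw(1) have "dominates n p w xw x0"
      by (auto simp: A_def B_def pareto_set_def dominates_def)
    with x0(1) xw(1) show False by (auto simp: A_def pareto_set_def)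
  qed
  moreover have "finite B" using finite_solutions by (simp add: B_def)
  ultimately obtain xl where xl: "xl \<in> B" "Min (dotp n w ` B) = dotp n w xl"
    by (metis obtains_MIN empty_iff)
  with \<open>finite B\<close> have xl_min: "dotp n w xl \<le> dotp n w z" if "z \<in> B" for z
    using that by (metis Min_le finite_imageI imageI)
  obtain i where i: "i < n" "xw i = 0" "xl i = 1"
    using ex_coordinate_if_dotp_less[of xw n xl p] xw(1) xl(1) p by (auto simp: A_def B_def)
  have "is_winner n p t i w xw"
    using xw(1) xw_max i by (auto simp: is_winner_def A_def)
  moreover have "is_loser n p i w xw xl"
    using xl(1) xl_min i by (auto simp: is_loser_def B_def)
  moreover have "t < dotp n w xl"
    using xl(1) xw_max by (force simp: A_def B_def)
  moreover have "dotp n w xl \<le> t + \<epsilon>"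
    using xl_min[OF \<open>x0 \<in> B\<close>] x0(2) by simp
  ultimately have "loser_in_window n p t \<epsilon> i w"
    using xw(1) xl(1) by (auto simp: loser_in_window_def A_def B_def)
  with i show ?thesis by blast
qed

lemma is_winner_fun_upd_profit_eq:
  assumes "is_winner n p t i (v(i := u)) x" "is_winner n p t i (v(i := u')) x'"
  shows "dotp n p x = dotp n p x'"
proof -
  have "dotp n (v(i := u')) x = dotp n (v(i := u)) x" "dotp n (v(i := u)) x' = dotp n (v(i := u')) x'"
    using assms by (simp_all add: is_winner_def dotp_fun_upd_if_zero)
  with assms have "dotp n p x' \<le> dotp n p x" "dotp n p x \<le> dotp n p x'"
    unfolding is_winner_def by auto
  then show ?thesis by simp
qed

lemma is_loser_fun_upd_weight_eq:
  assumes "i < n" "is_loser n p i (v(i := u)) x y" "is_loser n p i (v(i := u')) x' y'"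
    and "dotp n p x = dotp n p x'"
  shows "dotp n (v(i := 0)) y = dotp n (v(i := 0)) y'"
proof -
  have "dotp n (v(i := u)) y \<le> dotp n (v(i := u)) y'" "dotp n (v(i := u')) y' \<le> dotp n (v(i := u')) y"
    using assms(2-4) unfolding is_loser_def by auto
  moreover have "y i = 1" "y' i = 1" using assms(2,3) by (simp_all add: is_loser_def)
  ultimately show ?thesis
    unfolding dotp_fun_upd[OF assms(1), of v u] dotp_fun_upd[OF assms(1), of v u'] by simp
qed

lemma loser_in_window_section:
  assumes "i < n"
  obtains c where "\<And>u. loser_in_window n p t \<epsilon> i (v(i := u)) \<Longrightarrow> u + c \<in> {t<..t + \<epsilon>}"
proof (cases "\<exists>u0. loser_in_window n p t \<epsilon> i (v(i := u0))")
  case False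
  then show thesis using that by blast
next
  case True
  then obtain u0 x0 y0 where x0: "is_winner n p t i (v(i := u0)) x0"
    and y0: "is_loser n p i (v(i := u0)) x0 y0"
    unfolding loser_in_window_def by blast
  show thesis
  proof (rule that[of "dotp n (v(i := 0)) y0"])
    fix u assume "loser_in_window n p t \<epsilon> i (v(i := u))"
    then obtain x y where x: "is_winner n p t i (v(i := u)) x"
      and y: "is_loser n p i (v(i := u)) x y" and "dotp n (v(i := u)) y \<in> {t<..t + \<epsilon>}"
      unfolding loser_in_window_def by blast
    moreover have "dotp n (v(i := 0)) y = dotp n (v(i := 0)) y0"
      using is_loser_fun_upd_weight_eq[OF assms y y0 is_winner_fun_upd_profit_eq[OF x x0]] .
    moreover have "dotp n (v(i := u)) y = dotp n (v(i := 0)) y + u"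
      using dotp_fun_upd[OF assms, of v u y] y by (simp add: is_loser_def)
    ultimately show "u + dotp n (v(i := 0)) y0 \<in> {t<..t + \<epsilon>}" by (simp add: add.commute)
  qed
qed

lemma measurable_dotp_weight_measure[measurable]:
  "(\<lambda>w. dotp n w y) \<in> borel_measurable (weight_measure n a \<phi>)"
  unfolding weight_measure_def dotp_def by measurable

lemma pred_dotp_le_dotp[measurable]:
  "Measurable.pred (weight_measure n a \<phi>) (\<lambda>w. dotp n w y \<le> dotp n w z)"
  unfolding pred_def by (intro borel_measurable_le measurable_dotp_weight_measure)

lemma pred_dotp_less_dotp[measurable]:
  "Measurable.pred (weight_measure n a \<phi>) (\<lambda>w. dotp n w y < dotp n w z)"
  unfolding pred_def by (intro borel_measurable_less measurable_dotp_weight_measure)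

lemma pred_Ball_solutions[measurable (raw)]:
  "(\<And>z. z \<in> solutions n \<Longrightarrow> Measurable.pred M (\<lambda>w. P w z)) \<Longrightarrow>
    Measurable.pred M (\<lambda>w. \<forall>z\<in>solutions n. P w z)"
  by (rule pred_intros_finite(3)[OF finite_solutions])

lemma pred_Bex_solutions[measurable (raw)]:
  "(\<And>z. z \<in> solutions n \<Longrightarrow> Measurable.pred M (\<lambda>w. P w z)) \<Longrightarrow>
    Measurable.pred M (\<lambda>w. \<exists>z\<in>solutions n. P w z)"
  by (rule pred_intros_finite(4)[OF finite_solutions])

lemma pred_is_winner[measurable]:
  "Measurable.pred (weight_measure n a \<phi>) (\<lambda>w. is_winner n p t i w x)"
  unfolding is_winner_def by measurable

lemma pred_is_loser[measurable]:
  "Measurable.pred (weight_measure n a \<phi>) (\<lambda>w. is_loser n p i w x y)"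
  unfolding is_loser_def by measurable

lemma pred_loser_in_window[measurable]:
  "Measurable.pred (weight_measure n a \<phi>) (loser_in_window n p t \<epsilon> i)"
  unfolding loser_in_window_def by measurable

lemma pred_Bex_pareto_set[measurable]:
  assumes [measurable]: "S \<in> sets borel"
  shows "Measurable.pred (weight_measure n a \<phi>) (\<lambda>w. \<exists>x\<in>pareto_set n p w. dotp n w x \<in> S)"
proof -
  have eq: "(\<lambda>w. \<exists>x\<in>pareto_set n p w. dotp n w x \<in> S) =
      (\<lambda>w. \<exists>x\<in>solutions n. (\<forall>y\<in>solutions n. \<not> dominates n p w y x) \<and> dotp n w x \<in> S)"
    by (auto simp: pareto_set_def fun_eq_iff)
  show ?thesis unfolding eq dominates_def by measurable
qed

lemma emeasure_uniform_measure_interval_le: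
  fixes a b s \<epsilon> :: real
  assumes "a < b"
  shows "emeasure (uniform_measure lborel {a..b}) {s<..s + \<epsilon>} \<le> ennreal (\<epsilon> / (b - a))"
proof -
  have "emeasure (uniform_measure lborel {a..b}) {s<..s + \<epsilon>}
      = emeasure lborel ({a..b} \<inter> {s<..s + \<epsilon>}) / emeasure lborel {a..b}"
    by simp
  also have "\<dots> \<le> emeasure lborel {s<..s + \<epsilon>} / emeasure lborel {a..b}"
    by (intro divide_right_mono_ennreal emeasure_mono) auto
  also have "\<dots> = ennreal (\<epsilon> / (b - a))"
    using assms by (cases "\<epsilon> \<ge> 0") (auto simp: divide_ennreal intro!: ennreal_neg divide_nonpos_pos)
  finally show ?thesis .
qed

lemma (in product_prob_space) emeasure_PiM_le_if_sections_covered: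
  assumes "finite J" "i \<in> J" and F: "F \<in> sets (PiM J M)"
    and sections: "\<And>x. x \<in> space (PiM (J - {i}) M) \<Longrightarrow>
      \<exists>B\<in>sets (M i). emeasure (M i) B \<le> \<delta> \<and> (\<forall>y\<in>space (M i). x(i := y) \<in> F \<longrightarrow> y \<in> B)"
  shows "emeasure (PiM J M) F \<le> \<delta>"
proof -
  have F': "indicator F \<in> borel_measurable (PiM (insert i (J - {i})) M)"
    using F assms(2) by (simp add: insert_absorb)
  have "emeasure (PiM J M) F = (\<integral>\<^sup>+ w. indicator F w \<partial>PiM J M)"
    using F by simp
  also have "\<dots> = (\<integral>\<^sup>+ x. (\<integral>\<^sup>+ y. indicator F (x(i := y)) \<partial>M i) \<partial>PiM (J - {i}) M)"
    using product_nn_integral_insert[OF _ _ F'] assms(1,2) by (simp add: insert_absorb)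
  also have "\<dots> \<le> (\<integral>\<^sup>+ x. \<delta> \<partial>PiM (J - {i}) M)"
  proof (intro nn_integral_mono)
    fix x assume "x \<in> space (PiM (J - {i}) M)"
    then obtain B where B: "B \<in> sets (M i)" "emeasure (M i) B \<le> \<delta>"
      and cover: "\<forall>y\<in>space (M i). x(i := y) \<in> F \<longrightarrow> y \<in> B"
      using sections by blast
    have "(\<integral>\<^sup>+ y. indicator F (x(i := y)) \<partial>M i) \<le> (\<integral>\<^sup>+ y. indicator B y \<partial>M i)"
      using cover by (intro nn_integral_mono) (auto simp: indicator_def)
    also have "\<dots> \<le> \<delta>" using B by simp
    finally show "(\<integral>\<^sup>+ y. indicator F (x(i := y)) \<partial>M i) \<le> \<delta>" .
  qed
  also have "\<dots> = \<delta>"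
  proof -
    have "prob_space (PiM (J - {i}) M)" by (intro prob_space_PiM M.prob_space_axioms)
    then show ?thesis by (simp add: prob_space.emeasure_space_1)
  qed
  finally show ?thesis .
qed

lemma prob_space_uniform_measure_Icc:
  fixes a b :: real
  assumes "a < b"
  shows "prob_space (uniform_measure lborel {a..b})"
  using assms by (intro prob_space_uniform_measure) simp_all

lemma prob_space_weight_measure:
  assumes "\<phi> > 0"
  shows "prob_space (weight_measure n a \<phi>)"
  unfolding weight_measure_def using assms by (intro prob_space_PiM prob_space_uniform_measure_Icc) simp

lemma emeasure_loser_in_window_le:
  assumes "\<phi> > 0" "i < n"
  shows "emeasure (weight_measure n a \<phi>) {w \<in> space (weight_measure n a \<phi>). loser_in_window n p t \<epsilon> i w}
    \<le> ennreal (\<phi> * \<epsilon>)"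
proof -
  define U where "U j = uniform_measure lborel {a j .. a j + 1 / \<phi>}" for j
  interpret product_prob_space U "{..<n}"
    unfolding U_def using assms(1)
    by (intro product_prob_space.intro product_sigma_finite.intro product_prob_space_axioms.intro
        prob_space_imp_sigma_finite prob_space_uniform_measure_Icc) simp_all
  have M: "weight_measure n a \<phi> = PiM {..<n} U" unfolding weight_measure_def U_def ..
  have L: "{w \<in> space (weight_measure n a \<phi>). loser_in_window n p t \<epsilon> i w} \<in> sets (weight_measure n a \<phi>)"
    by measurable
  show ?thesis
    unfolding M
  proof (rule emeasure_PiM_le_if_sections_covered)
    show "{w \<in> space (PiM {..<n} U). loser_in_window n p t \<epsilon> i w} \<in> sets (PiM {..<n} U)"
      using L unfolding M .
    fix x
    obtain c where c: "\<And>u. loser_in_window n p t \<epsilon> i (x(i := u)) \<Longrightarrow> u + c \<in> {t<..t + \<epsilon>}"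
      using loser_in_window_section[OF assms(2)] by blast
    have "emeasure (U i) {t - c<..t - c + \<epsilon>} \<le> ennreal (\<epsilon> / (a i + 1 / \<phi> - a i))"
      unfolding U_def using assms(1) by (intro emeasure_uniform_measure_interval_le) simp
    also have "\<dots> = ennreal (\<phi> * \<epsilon>)" by (simp add: mult.commute)
    finally have "emeasure (U i) {t - c<..t - c + \<epsilon>} \<le> ennreal (\<phi> * \<epsilon>)" .
    moreover have "{t - c<..t - c + \<epsilon>} \<in> sets (U i)" by (simp add: U_def)
    ultimately show "\<exists>B\<in>sets (U i). emeasure (U i) B \<le> ennreal (\<phi> * \<epsilon>) \<and>
        (\<forall>y\<in>space (U i). x(i := y) \<in> {w \<in> space (PiM {..<n} U). loser_in_window n p t \<epsilon> i w} \<longrightarrow> y \<in> B)"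
      using c by force
  qed (use assms(2) in auto)
qed

theorem lemma2p4:
  fixes n :: nat and \<phi> t \<epsilon> :: real and p a :: "nat \<Rightarrow> real"
  assumes "\<phi> \<ge> 1"
    and "\<And>i. i < n \<Longrightarrow> p i \<ge> 0"
    and "\<And>i. i < n \<Longrightarrow> 0 \<le> a i \<and> a i + 1 / \<phi> \<le> 1"
    and "t \<ge> 0" and "\<epsilon> > 0"
  shows "{w \<in> space (weight_measure n a \<phi>).
            \<exists>x \<in> pareto_set n p w. dotp n w x \<in> {t<..t + \<epsilon>}} \<in> sets (weight_measure n a \<phi>)
       \<and> measure (weight_measure n a \<phi>)
            {w \<in> space (weight_measure n a \<phi>).
              \<exists>x \<in> pareto_set n p w. dotp n w x \<in> {t<..t + \<epsilon>}}
         \<le> real n * \<phi> * \<epsilon>"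
proof -
  let ?M = "weight_measure n a \<phi>"
  let ?E = "{w \<in> space ?M. \<exists>x \<in> pareto_set n p w. dotp n w x \<in> {t<..t + \<epsilon>}}"
  let ?L = "\<lambda>i. {w \<in> space ?M. loser_in_window n p t \<epsilon> i w}"
  have "\<phi> > 0" using assms(1) by simp
  then interpret prob_space ?M by (rule prob_space_weight_measure)
  have E: "?E \<in> sets ?M" by measurable
  have L: "?L i \<in> sets ?M" for i by measurable
  have "?E \<subseteq> (\<Union>i<n. ?L i)"
  proof
    fix w assume "w \<in> ?E"
    then obtain x where "x \<in> pareto_set n p w" "dotp n w x \<in> {t<..t + \<epsilon>}" by blast
    then obtain i where "i < n" "loser_in_window n p t \<epsilon> i w"
      using pareto_in_window_imp_loser_in_window assms(2,4) by blast
    with \<open>w \<in> ?E\<close> show "w \<in> (\<Union>i<n. ?L i)" by blast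
  qed
  then have "emeasure ?M ?E \<le> emeasure ?M (\<Union>i<n. ?L i)"
    using L by (intro emeasure_mono) auto
  also have "\<dots> \<le> (\<Sum>i<n. emeasure ?M (?L i))"
    using L by (intro emeasure_subadditive_finite) auto
  also have "\<dots> \<le> (\<Sum>i<n. ennreal (\<phi> * \<epsilon>))"
    using emeasure_loser_in_window_le[OF \<open>\<phi> > 0\<close>] by (intro sum_mono) simp
  also have "\<dots> = ennreal (real n * \<phi> * \<epsilon>)"
    using \<open>\<phi> > 0\<close> assms(5) by (simp add: ennreal_of_nat_eq_real_of_nat ennreal_mult mult.assoc)
  finally have "measure ?M ?E \<le> real n * \<phi> * \<epsilon>"
    using \<open>\<phi> > 0\<close> assms(5) by (simp add: emeasure_eq_measure ennreal_le_iff)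
  with E show ?thesis by blast
qed

end
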